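(* Let $\alpha\geq 0$, $\beta\geq 0$, and let $g\in H(\mathbb D)$ be such that $g'$ has no zeros in $\mathbb D$ and an analytic branch of $\log(g')$ belongs to the Bloch space $\mathcal B$. Then $T_g: H^{\infty}_\alpha\rightarrow H^{\infty}_\beta$ is bounded if and only if $$\limsup_{t\rightarrow1^-}\sup_{0\leq\theta<2\pi}(1-t^2)^\beta\int_0^t\frac{|g'(re^{i\theta})|}{(1-r^2)^\alpha}\,dr<+\infty\,.$$
   Context: $\mathbb D$ is the open unit disk and $H(\mathbb D)$ the space of analytic functions on $\mathbb D$. For $\alpha\geq0$, $H^{\infty}_\alpha=\{f\in H(\mathbb D): \|f\|_{H^\infty_\alpha}:=\sup_{z\in\mathbb D}(1-|z|^2)^\alpha|f(z)|<\infty\}$. The Bloch space is $\mathcal B=\{f\in H(\mathbb D): |f(0)|+\sup_{z\in\mathbb D}(1-|z|^2)|f'(z)|<\infty\}$. For $g\in H(\mathbb D)$, the Volterra type operator is $(T_gf)(z)=\int_0^z f(\omega)g'(\omega)\,d\omega$ for $f\in H(\mathbb D)$, $z\in\mathbb D$. *)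

theory Defs
  imports "HOL-Complex_Analysis.Complex_Analysis" "HOL-Library.Liminf_Limsup"
begin

definition hinf_norm :: "real \<Rightarrow> (complex \<Rightarrow> complex) \<Rightarrow> real" where
  "hinf_norm \<alpha> f = (SUP z\<in>ball 0 1. (1 - (norm z)^2) powr \<alpha> * norm (f z))"

definition Hinf :: "real \<Rightarrow> (complex \<Rightarrow> complex) set" where
  "Hinf \<alpha> = {f. f holomorphic_on ball 0 1 \<and>
                 bounded ((\<lambda>z. (1 - (norm z)^2) powr \<alpha> * norm (f z)) ` ball 0 1)}"

definition Bloch :: "(complex \<Rightarrow> complex) set" where
  "Bloch = {f. f holomorphic_on ball 0 1 \<and>
               bounded ((\<lambda>z. (1 - (norm z)^2) * norm (deriv f z)) ` ball 0 1)}"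

definition volterra :: "(complex \<Rightarrow> complex) \<Rightarrow> (complex \<Rightarrow> complex) \<Rightarrow> complex \<Rightarrow> complex" where
  "volterra g f z = contour_integral (linepath 0 z) (\<lambda>w. f w * deriv g w)"

definition volterra_bounded :: "(complex \<Rightarrow> complex) \<Rightarrow> real \<Rightarrow> real \<Rightarrow> bool" where
  "volterra_bounded g \<alpha> \<beta> \<longleftrightarrow>
     (\<forall>f\<in>Hinf \<alpha>. volterra g f \<in> Hinf \<beta>) \<and>
     (\<exists>C. \<forall>f\<in>Hinf \<alpha>. hinf_norm \<beta> (volterra g f) \<le> C * hinf_norm \<alpha> f)"

end

theory Submission
  imports Defs
begin

text \<open>
  Write \<open>I(\<zeta>, t) = \<integral>\<^sub>0\<^sup>t |g'(r\<zeta>)| (1 - r\<^sup>2)\<^sup>-\<^sup>\<alpha> dr\<close>; the limsup condition says that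
  \<open>(1 - t\<^sup>2)\<^sup>\<beta> I(\<zeta>, t)\<close> is bounded for \<open>|\<zeta>| = 1\<close> and \<open>0 \<le> t < 1\<close>. Integrating along the ray
  gives \<open>|T\<^sub>g f(t\<zeta>)| \<le> \<parallel>f\<parallel>\<^sub>\<alpha> I(\<zeta>, t)\<close>, hence sufficiency.

  For necessity, fix \<open>\<zeta>\<close> and \<open>t\<close> and test \<open>T\<^sub>g\<close> on
  \<open>f(z) = cnj \<zeta> exp (i V(w) + \<alpha> w)\<close> with \<open>w = - log (1 - cnj \<zeta> z)\<close>. The factor \<open>e\<^sup>\<alpha>\<^sup>w\<close> supplies the weight
  \<open>(1 - r)\<^sup>-\<^sup>\<alpha>\<close> on the ray and is at most \<open>2\<^sup>\<alpha> (1 - |z|\<^sup>2)\<^sup>-\<^sup>\<alpha>\<close> on the disc. The holomorphic function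
  \<open>V\<close> has bounded imaginary part on the strip \<open>|Im w| \<le> \<pi>/2\<close>, and on \<open>[0, - log (1 - t)]\<close> its real
  part stays within 1 of the phase \<open>s \<mapsto> - Im log g'((1 - e\<^sup>-\<^sup>s) \<zeta>)\<close>, which is Lipschitz because
  \<open>log g'\<close> is a Bloch function. Then \<open>\<zeta> f g'\<close> has argument in \<open>[-1, 1]\<close> along the ray, so
  \<open>Re T\<^sub>g f(t\<zeta>) \<ge> c I(\<zeta>, t)\<close> with \<open>\<parallel>f\<parallel>\<^sub>\<alpha>\<close> and \<open>c > 0\<close> independent of \<open>\<zeta>\<close> and \<open>t\<close>.

  \<open>V\<close> is the sum of the increments of the phase over a grid of mesh \<open>\<delta> \<sim> 1/B\<close> (\<open>B\<close> the Lipschitz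
  constant), each increment multiplied by a translate of an entire smoothing of the Heaviside step of
  width \<open>\<delta>\<close>, built from the primitive of \<open>exp (- z\<^sup>2)\<close>. The smoothing errors decay exponentially
  away from each jump, and their sum is bounded by comparison with the Laplace distribution function.
\<close>

lemma contour_integral_linepath_has_field_derivative:
  fixes p :: "complex \<Rightarrow> complex"
  assumes p: "p holomorphic_on S" and S: "open S" "convex S" and a: "a \<in> S" and z: "z \<in> S"
  shows "((\<lambda>w. contour_integral (linepath a w) p) has_field_derivative p z) (at z)"
proof -
  obtain P where P: "\<And>x. x \<in> S \<Longrightarrow> (P has_field_derivative p x) (at x within S)"
    using holomorphic_convex_primitive'[OF S(2,1) p] by blast
  have primitive: "contour_integral (linepath a w) p = P w - P a" if w: "w \<in> S" for w
  proof -
    have "closed_segment a w \<subseteq> S"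
      using S(2) a w by (simp add: closed_segment_subset)
    then have "(p has_contour_integral P w - P a) (linepath a w)"
      using contour_integral_primitive[OF P valid_path_linepath] by simp
    then show ?thesis by (rule contour_integral_unique)
  qed
  have "((\<lambda>w. P w - P a) has_field_derivative p z) (at z)"
    using P[OF z] at_within_open[OF z S(1)] by (auto intro!: derivative_eq_intros)
  then show ?thesis
    by (rule has_field_derivative_transform_within_open[OF _ S(1) z]) (simp add: primitive)
qed

lemma contour_integral_linepath_ray:
  fixes p :: "complex \<Rightarrow> complex"
  assumes "0 \<le> t"
  shows "contour_integral (linepath 0 (of_real t * \<zeta>)) p = \<zeta> * integral {0..t} (\<lambda>r. p (of_real r * \<zeta>))"
proof (cases "t = 0")
  case False
  with assms have t: "0 < t" by simp
  have "contour_integral (linepath 0 (of_real t * \<zeta>)) p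
      = integral {0..1} (\<lambda>x. p (of_real (t * x) * \<zeta>)) * (of_real t * \<zeta>)"
    by (simp add: contour_integral_integral linepath_def scaleR_conv_of_real mult_ac)
  also have "integral {0..1} (\<lambda>x. p (of_real (t * x) * \<zeta>)) = integral {0..t} (\<lambda>r. p (of_real r * \<zeta>)) / of_real t"
    using integral_stretch_real[of t 0 t "\<lambda>r. p (of_real r * \<zeta>)"] t
    by (simp add: scaleR_conv_of_real divide_inverse_commute)
  finally show ?thesis using t by (simp del: linepath_0 add: mult.commute)
qed simp

section \<open>An entire smoothing of the Heaviside step\<close>

definition gauss_primitive :: "complex \<Rightarrow> complex" where
  "gauss_primitive w = contour_integral (linepath 0 w) (\<lambda>z. exp (-(z^2)))"

lemma gauss_primitive_has_field_derivative:
  "(gauss_primitive has_field_derivative exp (-(w^2))) (at w)"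
  unfolding gauss_primitive_def[abs_def]
  by (rule contour_integral_linepath_has_field_derivative[where S = UNIV]) (auto intro!: holomorphic_intros)

lemma holomorphic_on_gauss_primitive [holomorphic_intros]:
  "(\<lambda>z. gauss_primitive (f z)) holomorphic_on S" if "f holomorphic_on S"
proof -
  have "gauss_primitive holomorphic_on f ` S"
    using gauss_primitive_has_field_derivative
    by (meson field_differentiable_def field_differentiable_at_within holomorphic_on_def)
  then show ?thesis
    using holomorphic_on_compose[of f S gauss_primitive] that by (simp add: o_def)
qed

lemma gauss_primitive_has_contour_integral:
  "((\<lambda>z. exp (-(z^2))) has_contour_integral gauss_primitive b - gauss_primitive a) (linepath a b)"
  using contour_integral_primitive[of UNIV gauss_primitive, OF _ valid_path_linepath]
  by (simp add: has_field_derivative_at_within gauss_primitive_has_field_derivative)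

lemma gauss_primitive_of_real_has_vector_derivative:
  "((\<lambda>u. gauss_primitive (of_real u)) has_vector_derivative of_real (exp (-(u^2)))) (at u)"
  using has_vector_derivative_real_field[OF gauss_primitive_has_field_derivative[of "of_real u"]]
  by (simp flip: exp_of_real)

definition gauss_real :: "real \<Rightarrow> real" where
  "gauss_real u = Re (gauss_primitive (of_real u))"

lemma gauss_real_has_real_derivative: "(gauss_real has_real_derivative exp (-(u^2))) (at u)"
  using has_field_derivative_Re[OF gauss_primitive_of_real_has_vector_derivative[of u]]
  unfolding gauss_real_def by simp

lemma gauss_primitive_of_real: "gauss_primitive (of_real u) = of_real (gauss_real u)"
proof -
  have "((\<lambda>u. Im (gauss_primitive (of_real u))) has_real_derivative 0) (at x)" for x
    using has_field_derivative_Im[OF gauss_primitive_of_real_has_vector_derivative[of x]] by simp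
  from DERIV_isconst_all[OF allI[OF this], of u 0] have "Im (gauss_primitive (of_real u)) = 0"
    by (simp add: gauss_primitive_def)
  then show ?thesis by (simp add: gauss_real_def complex_eq_iff)
qed

lemma gauss_real_0 [simp]: "gauss_real 0 = 0"
  by (simp add: gauss_real_def gauss_primitive_def)

lemma gauss_real_minus: "gauss_real (-u) = - gauss_real u"
proof -
  have "((\<lambda>u. gauss_real u + gauss_real (-u)) has_real_derivative 0) (at x)" for x
  proof -
    have "((\<lambda>u. gauss_real u + gauss_real (-u)) has_real_derivative exp (-(x^2)) + exp (-((-x)^2)) * (-1)) (at x)"
      by (rule DERIV_add[OF gauss_real_has_real_derivative])
        (rule DERIV_chain2[OF gauss_real_has_real_derivative], auto intro!: derivative_eq_intros)
    then show ?thesis by simp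
  qed
  from DERIV_isconst_all[OF allI[OF this], of u 0] show ?thesis by simp
qed

lemma strict_mono_gauss_real: "strict_mono gauss_real"
proof (rule strict_monoI)
  fix a b :: real
  assume "a < b"
  then show "gauss_real a < gauss_real b"
    by (rule DERIV_pos_imp_increasing) (use gauss_real_has_real_derivative exp_gt_zero in blast)
qed

lemma exp_neg_square_le: "exp (-(x^2)) \<le> exp (1/4 - x)" for x :: real
proof -
  have "0 \<le> (x - 1/2)^2" by simp
  then show ?thesis by (simp add: power2_eq_square algebra_simps)
qed

lemma gauss_real_le: "gauss_real v \<le> gauss_real u + exp (1/4 - u)"
proof (cases "v \<le> u")
  case True
  then have "gauss_real v \<le> gauss_real u"
    by (simp add: strict_mono_less_eq[OF strict_mono_gauss_real])
  then show ?thesis using exp_gt_zero[of "1/4 - u"] by linarith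
next
  case False
  have "gauss_real v + exp (1/4 - v) \<le> gauss_real u + exp (1/4 - u)"
  proof (rule DERIV_nonpos_imp_nonincreasing[of u v])
    fix x
    have "((\<lambda>x. gauss_real x + exp (1/4 - x)) has_real_derivative exp (-(x^2)) + exp (1/4 - x) * (0 - 1)) (at x)"
      by (rule DERIV_add[OF gauss_real_has_real_derivative]) (rule derivative_intros)+
    then show "\<exists>y. ((\<lambda>x. gauss_real x + exp (1/4 - x)) has_real_derivative y) (at x) \<and> y \<le> 0"
      using exp_neg_square_le[of x] by force
  qed (use False in simp)
  then show ?thesis using exp_gt_zero[of "1/4 - v"] by linarith
qed

text \<open>The value of \<open>gauss_limit\<close> is \<open>sqrt pi / 2\<close>, but only its positivity and the tail bound
  \<open>gauss_limit_le\<close> are needed.\<close>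

definition gauss_limit :: real where
  "gauss_limit = Sup (range gauss_real)"

lemma bdd_above_gauss_real: "bdd_above (range gauss_real)"
  by (rule bdd_aboveI[of _ "exp (1/4)"]) (use gauss_real_le[of _ 0] in auto)

lemma gauss_real_le_limit: "gauss_real u \<le> gauss_limit"
  unfolding gauss_limit_def by (rule cSup_upper[OF _ bdd_above_gauss_real]) simp

lemma gauss_limit_le: "gauss_limit \<le> gauss_real u + exp (1/4 - u)"
  unfolding gauss_limit_def by (rule cSup_least) (auto intro: gauss_real_le)

lemma gauss_limit_pos: "0 < gauss_limit"
  using strict_monoD[OF strict_mono_gauss_real, of 0 1] gauss_real_le_limit[of 1] by simp

definition gauss_step_const :: real where
  "gauss_step_const = exp (1/4) / (2 * gauss_limit)"

definition smooth_step :: "real \<Rightarrow> complex \<Rightarrow> complex" where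
  "smooth_step \<epsilon> w = 1/2 + gauss_primitive (w / of_real \<epsilon>) / of_real (2 * gauss_limit)"

lemma holomorphic_on_smooth_step [holomorphic_intros]:
  "(\<lambda>z. smooth_step \<epsilon> (f z)) holomorphic_on S" if "f holomorphic_on S"
  unfolding smooth_step_def using that gauss_limit_pos by (intro holomorphic_intros) auto

lemma Re_smooth_step_of_real:
  "Re (smooth_step \<epsilon> (of_real x)) = 1/2 + gauss_real (x / \<epsilon>) / (2 * gauss_limit)"
proof -
  have "gauss_primitive (of_real x / of_real \<epsilon>) = of_real (gauss_real (x / \<epsilon>))"
    using gauss_primitive_of_real[of "x / \<epsilon>"] by simp
  then show ?thesis by (simp add: smooth_step_def Re_divide_of_real)
qed

lemma smooth_step_approx_heaviside:
  assumes "0 < \<epsilon>"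
  shows "\<bar>Re (smooth_step \<epsilon> (of_real x)) - (if 0 \<le> x then 1 else 0)\<bar>
           \<le> gauss_step_const * exp (-\<bar>x\<bar> / \<epsilon>)"
proof -
  define u where "u = \<bar>x\<bar> / \<epsilon>"
  define L where "L = gauss_limit"
  have L: "0 < L" by (simp add: L_def gauss_limit_pos)
  have "Re (smooth_step \<epsilon> (of_real x)) - (if 0 \<le> x then 1 else 0)
      = (if 0 \<le> x then gauss_real u - L else L - gauss_real u) / (2 * L)"
  proof (cases "0 \<le> x")
    case True
    then have "x / \<epsilon> = u" by (simp add: u_def)
    then show ?thesis using True L by (simp add: Re_smooth_step_of_real L_def[symmetric] field_simps)
  next
    case False
    then have "x / \<epsilon> = - u" by (simp add: u_def)
    then show ?thesis
      using False L by (simp add: Re_smooth_step_of_real gauss_real_minus L_def[symmetric] field_simps)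
  qed
  then have "\<bar>Re (smooth_step \<epsilon> (of_real x)) - (if 0 \<le> x then 1 else 0)\<bar> = (L - gauss_real u) / (2 * L)"
    using L gauss_real_le_limit[of u] by (simp add: L_def[symmetric] abs_divide)
  also have "\<dots> \<le> exp (1/4 - u) / (2 * L)"
    using gauss_limit_le[of u] L by (intro divide_right_mono) (auto simp: L_def)
  also have "\<dots> = gauss_step_const * exp (-u)"
    by (simp add: gauss_step_const_def L_def flip: exp_add)
  also have "exp (-u) = exp (-\<bar>x\<bar> / \<epsilon>)"
    by (simp add: u_def)
  finally show ?thesis .
qed

lemma abs_Im_gauss_primitive_le:
  "\<bar>Im (gauss_primitive w)\<bar> \<le> \<bar>Im w\<bar> * exp (Im w ^ 2 - Re w ^ 2)"
proof -
  define u where "u = complex_of_real (Re w)"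
  have bound: "norm (exp (-(z^2))) \<le> exp (Im w ^ 2 - Re w ^ 2)" if "z \<in> closed_segment u w" for z
  proof -
    have "\<exists>a. 0 \<le> a \<and> a \<le> 1 \<and> z = (1 - a) *\<^sub>R u + a *\<^sub>R w"
      using that by (simp only: in_segment(1))
    then obtain a where a: "0 \<le> a" "a \<le> 1" "z = (1 - a) *\<^sub>R u + a *\<^sub>R w"
      by blast
    have "Re z = Re w" "Im z = a * Im w"
      unfolding a(3) u_def by (simp_all add: algebra_simps)
    moreover have "a^2 * Im w ^ 2 \<le> Im w ^ 2"
      using a by (intro mult_left_le_one_le) (auto simp: power_le_one)
    ultimately show ?thesis by (simp add: Re_power2 power_mult_distrib)
  qed
  have "norm (gauss_primitive w - gauss_primitive u) \<le> exp (Im w ^ 2 - Re w ^ 2) * norm (w - u)"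
    by (rule has_contour_integral_bound_linepath[OF gauss_primitive_has_contour_integral _ bound]) simp_all
  moreover have "norm (w - u) = \<bar>Im w\<bar>"
    by (simp add: u_def norm_complex_def)
  moreover have "Im (gauss_primitive u) = 0"
    by (simp add: u_def gauss_primitive_of_real)
  ultimately show ?thesis
    using abs_Im_le_cmod[of "gauss_primitive w - gauss_primitive u"] by (simp add: mult.commute)
qed

lemma abs_Im_smooth_step_le:
  assumes "0 < \<epsilon>" and "\<bar>Im w\<bar> \<le> \<epsilon> * Y"
  shows "\<bar>Im (smooth_step \<epsilon> w)\<bar> \<le> gauss_step_const * Y * exp (Y^2) * exp (-\<bar>Re w\<bar> / \<epsilon>)"
proof -
  define v where "v = w / of_real \<epsilon>"
  have Re_v: "Re v = Re w / \<epsilon>" and Im_v: "Im v = Im w / \<epsilon>"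
    by (simp_all add: v_def Re_divide_of_real Im_divide_of_real)
  have Y: "\<bar>Im v\<bar> \<le> Y"
    using assms by (simp add: Im_v abs_divide divide_le_eq mult.commute)
  have "\<bar>Im (gauss_primitive v)\<bar> \<le> \<bar>Im v\<bar> * (exp (Im v ^ 2) * exp (-(\<bar>Re v\<bar>^2)))"
    using abs_Im_gauss_primitive_le[of v] by (simp flip: exp_add)
  also have "\<dots> \<le> Y * (exp (Y^2) * exp (1/4 - \<bar>Re v\<bar>))"
    using Y power_mono[OF Y abs_ge_zero, of 2] exp_neg_square_le[of "\<bar>Re v\<bar>"]
    by (intro mult_mono) auto
  finally have "\<bar>Im (gauss_primitive v)\<bar> / (2 * gauss_limit)
      \<le> Y * (exp (Y^2) * exp (1/4 - \<bar>Re v\<bar>)) / (2 * gauss_limit)"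
    using gauss_limit_pos by (intro divide_right_mono) auto
  moreover have "Im (smooth_step \<epsilon> w) = Im (gauss_primitive v) / (2 * gauss_limit)"
    by (simp add: smooth_step_def v_def Im_divide_of_real)
  moreover have "exp (1/4 - \<bar>Re v\<bar>) = exp (1/4) * exp (-\<bar>Re w\<bar> / \<epsilon>)"
    using assms(1) by (simp add: Re_v abs_divide flip: exp_add)
  ultimately show ?thesis
    using gauss_limit_pos by (simp add: gauss_step_const_def abs_divide mult_ac)
qed

section \<open>Sums of exponentially decaying weights\<close>

definition laplace_cdf :: "real \<Rightarrow> real" where
  "laplace_cdf v = (if v \<le> 0 then exp v / 2 else 1 - exp (-v) / 2)"

definition laplace_gap :: real where
  "laplace_gap = (1 - exp (-1/2)) / 2"

lemma laplace_gap_pos: "0 < laplace_gap"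
  by (simp add: laplace_gap_def)

lemma laplace_cdf_bounds: "0 \<le> laplace_cdf v" "laplace_cdf v \<le> 1"
proof -
  have exp_le_1: "exp x \<le> 1" if "x \<le> 0" for x :: real
    using that by simp
  have "laplace_cdf v = exp v / 2 \<and> exp v \<le> 1 \<or> laplace_cdf v = 1 - exp (-v) / 2 \<and> exp (-v) \<le> 1"
    using exp_le_1[of v] exp_le_1[of "-v"] by (simp add: laplace_cdf_def)
  then show "0 \<le> laplace_cdf v" "laplace_cdf v \<le> 1"
    using exp_gt_zero[of v] exp_gt_zero[of "-v"] by linarith+
qed

lemma exp_reflected_sum_le:
  fixes v :: real
  assumes "-1 \<le> v" "v \<le> 0"
  shows "exp (-v-1) + exp v \<le> 1 + exp (-1/2)"
proof (cases "v \<le> -1/2")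
  case True
  then have "exp v \<le> exp (-1/2)" "exp (-v-1) \<le> 1" using assms by simp_all
  then show ?thesis by linarith
next
  case False
  then have "exp (-v-1) \<le> exp (-1/2)" "exp v \<le> 1" using assms by simp_all
  then show ?thesis by linarith
qed

lemma laplace_cdf_increment_ge:
  "laplace_gap * exp (-\<bar>v\<bar>) \<le> laplace_cdf (v + 1) - laplace_cdf v"
proof -
  consider "0 \<le> v" | "v \<le> -1" | "-1 < v" "v < 0" by linarith
  then show ?thesis
  proof cases
    case 1
    have "laplace_gap * exp (-\<bar>v\<bar>) = laplace_gap * exp (-v)"
      using 1 by simp
    also have "\<dots> \<le> (1 - exp (-1)) / 2 * exp (-v)"
      by (intro mult_right_mono) (simp_all add: laplace_gap_def)
    also have "\<dots> = laplace_cdf (v + 1) - laplace_cdf v"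
    proof -
      have "laplace_cdf (v + 1) = 1 - exp (-1) * exp (-v) / 2" "laplace_cdf v = 1 - exp (-v) / 2"
        using 1 by (auto simp: laplace_cdf_def simp flip: exp_add)
      then show ?thesis by (simp add: field_simps)
    qed
    finally show ?thesis .
  next
    case 2
    have "laplace_gap * exp (-\<bar>v\<bar>) = laplace_gap * exp v"
      using 2 by simp
    also have "\<dots> \<le> (exp 1 - 1) / 2 * exp v"
    proof (rule mult_right_mono)
      have "1 - exp (-1/2) \<le> exp 1 - (1::real)"
        using exp_ge_add_one_self[of 1] exp_gt_zero[of "-1/2"] by linarith
      then show "laplace_gap \<le> (exp 1 - 1) / 2"
        unfolding laplace_gap_def by simp
    qed simp
    also have "\<dots> = laplace_cdf (v + 1) - laplace_cdf v"
    proof -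
      have "laplace_cdf (v + 1) = exp 1 * exp v / 2" "laplace_cdf v = exp v / 2"
        using 2 by (auto simp: laplace_cdf_def simp flip: exp_add)
      then show ?thesis by (simp add: field_simps)
    qed
    finally show ?thesis .
  next
    case 3
    have "exp (-v-1) + exp v \<le> 1 + exp (-1/2)"
      using 3 by (intro exp_reflected_sum_le) auto
    moreover have "laplace_cdf (v + 1) - laplace_cdf v = 1 - (exp (-v-1) + exp v) / 2"
      using 3 by (simp add: laplace_cdf_def field_simps)
    ultimately have "laplace_gap \<le> laplace_cdf (v + 1) - laplace_cdf v"
      unfolding laplace_gap_def by (simp add: field_simps)
    moreover have "laplace_gap * exp (-\<bar>v\<bar>) \<le> laplace_gap"
      using laplace_gap_pos by (simp add: mult_le_cancel_left1)
    ultimately show ?thesis by linarith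
  qed
qed

lemma sum_exp_neg_abs_le: "(\<Sum>n<N. exp (-\<bar>u - real n\<bar>)) \<le> 1 / laplace_gap"
proof -
  have "(\<Sum>n<N. exp (-\<bar>u - real n\<bar>))
      \<le> (\<Sum>n<N. laplace_cdf (real (Suc n) - u) - laplace_cdf (real n - u)) / laplace_gap"
    unfolding sum_divide_distrib
  proof (rule sum_mono)
    fix n
    show "exp (-\<bar>u - real n\<bar>) \<le> (laplace_cdf (real (Suc n) - u) - laplace_cdf (real n - u)) / laplace_gap"
      using laplace_cdf_increment_ge[of "real n - u"] laplace_gap_pos
      by (simp add: field_simps abs_minus_commute)
  qed
  also have "\<dots> = (laplace_cdf (real N - u) - laplace_cdf (- u)) / laplace_gap"
    using sum_lessThan_telescope[of "\<lambda>n. laplace_cdf (real n - u)" N] by simp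
  also have "\<dots> \<le> 1 / laplace_gap"
    using laplace_cdf_bounds[of "real N - u"] laplace_cdf_bounds[of "- u"] laplace_gap_pos
    by (intro divide_right_mono) auto
  finally show ?thesis .
qed

lemma abs_sum_exp_decay_le:
  assumes a: "\<And>n. \<bar>a n\<bar> \<le> A" and b: "\<And>n. \<bar>b n\<bar> \<le> K * exp (-\<bar>u - real n\<bar>)"
  shows "\<bar>\<Sum>n<N. a n * b n\<bar> \<le> A * K / laplace_gap"
proof -
  have A: "0 \<le> A" using a[of 0] by linarith
  have "0 \<le> K * exp (-\<bar>u - real 0\<bar>)" using b[of 0] by linarith
  then have K: "0 \<le> K" by (simp add: zero_le_mult_iff)
  have "\<bar>\<Sum>n<N. a n * b n\<bar> \<le> (\<Sum>n<N. \<bar>a n\<bar> * \<bar>b n\<bar>)"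
    using sum_abs[of "\<lambda>n. a n * b n" "{..<N}"] by (simp add: abs_mult)
  also have "\<dots> \<le> (\<Sum>n<N. A * (K * exp (-\<bar>u - real n\<bar>)))"
  proof (rule sum_mono)
    fix n
    show "\<bar>a n\<bar> * \<bar>b n\<bar> \<le> A * (K * exp (-\<bar>u - real n\<bar>))"
      using a[of n] b[of n] A by (intro mult_mono) auto
  qed
  also have "\<dots> = A * K * (\<Sum>n<N. exp (-\<bar>u - real n\<bar>))"
    by (simp add: sum_distrib_left mult_ac)
  also have "\<dots> \<le> A * K * (1 / laplace_gap)"
    using A K by (intro mult_left_mono sum_exp_neg_abs_le) simp
  finally show ?thesis by simp
qed

section \<open>Holomorphic approximation of Lipschitz phases\<close>

definition smooth_phase :: "real \<Rightarrow> (real \<Rightarrow> real) \<Rightarrow> nat \<Rightarrow> complex \<Rightarrow> complex" where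
  "smooth_phase \<delta> \<phi> N w = of_real (\<phi> 0) +
     (\<Sum>n<N. of_real (\<phi> (real (Suc n) * \<delta>) - \<phi> (real n * \<delta>)) * smooth_step \<delta> (w - of_real (real n * \<delta>)))"

lemma holomorphic_on_smooth_phase [holomorphic_intros]:
  "(\<lambda>z. smooth_phase \<delta> \<phi> N (f z)) holomorphic_on S" if "f holomorphic_on S"
  unfolding smooth_phase_def using that by (intro holomorphic_intros)

lemma sum_grid_increments_heaviside:
  fixes \<phi> :: "real \<Rightarrow> real"
  assumes \<delta>: "0 < \<delta>" and s: "0 \<le> s" "s \<le> real N * \<delta>"
  obtains m where
    "(\<Sum>n<N. (\<phi> (real (Suc n) * \<delta>) - \<phi> (real n * \<delta>)) * (if 0 \<le> s - real n * \<delta> then 1 else 0))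
       = \<phi> (real m * \<delta>) - \<phi> 0"
    and "\<bar>real m * \<delta> - s\<bar> \<le> \<delta>"
proof -
  define D where "D n = \<phi> (real (Suc n) * \<delta>) - \<phi> (real n * \<delta>)" for n
  define k where "k = nat \<lfloor>s / \<delta>\<rfloor>"
  define m where "m = min N (Suc k)"
  have below_iff: "0 \<le> s - real n * \<delta> \<longleftrightarrow> n \<le> k" for n
  proof -
    have "0 \<le> s - real n * \<delta> \<longleftrightarrow> real n \<le> s / \<delta>"
      using \<delta> by (simp add: field_simps)
    also have "\<dots> \<longleftrightarrow> n \<le> k"
      using s(1) \<delta> by (simp add: k_def le_nat_iff le_floor_iff)
    finally show ?thesis .
  qed
  have "(\<Sum>n<N. D n * (if 0 \<le> s - real n * \<delta> then 1 else 0)) = (\<Sum>n<N. if 0 \<le> s - real n * \<delta> then D n else 0)"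
    by (intro sum.cong) simp_all
  also have "\<dots> = sum D {n \<in> {..<N}. 0 \<le> s - real n * \<delta>}"
    by (rule sum.inter_filter[symmetric]) simp
  also have "{n \<in> {..<N}. 0 \<le> s - real n * \<delta>} = {..<m}"
    by (rule set_eqI) (simp only: mem_Collect_eq lessThan_iff below_iff m_def min_less_iff_conj less_Suc_eq_le)
  also have "sum D {..<m} = \<phi> (real m * \<delta>) - \<phi> 0"
    unfolding D_def using sum_lessThan_telescope[of "\<lambda>n. \<phi> (real n * \<delta>)" m] by simp
  finally have "(\<Sum>n<N. D n * (if 0 \<le> s - real n * \<delta> then 1 else 0)) = \<phi> (real m * \<delta>) - \<phi> 0" .
  moreover have "\<bar>real m * \<delta> - s\<bar> \<le> \<delta>"
  proof (cases "Suc k \<le> N")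
    case True
    have "real k \<le> s / \<delta>" "s / \<delta> < real k + 1"
      using s(1) \<delta> by (simp_all add: k_def)
    then show ?thesis
      using True \<delta> by (simp add: m_def field_simps)
  next
    case False
    then have "real N * \<delta> \<le> s"
      using below_iff[of N] by simp
    then show ?thesis using False s(2) \<delta> by (simp add: m_def)
  qed
  ultimately show ?thesis using that unfolding D_def by blast
qed

context
  fixes \<phi> :: "real \<Rightarrow> real" and L \<delta> :: real
  assumes lipschitz: "\<And>a b. 0 \<le> a \<Longrightarrow> 0 \<le> b \<Longrightarrow> \<bar>\<phi> a - \<phi> b\<bar> \<le> L * \<bar>a - b\<bar>"
    and \<delta>: "0 < \<delta>"
begin

lemma abs_phase_jump_le: "\<bar>\<phi> (real (Suc n) * \<delta>) - \<phi> (real n * \<delta>)\<bar> \<le> L * \<delta>"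
  using lipschitz[of "real (Suc n) * \<delta>" "real n * \<delta>"] \<delta> by (simp add: algebra_simps)

lemma exp_neg_dist_grid: "exp (-\<bar>x - real n * \<delta>\<bar> / \<delta>) = exp (-\<bar>x / \<delta> - real n\<bar>)"
proof -
  have "(x - real n * \<delta>) / \<delta> = x / \<delta> - real n" using \<delta> by (simp add: field_simps)
  then have "\<bar>x - real n * \<delta>\<bar> / \<delta> = \<bar>x / \<delta> - real n\<bar>" using \<delta> by (metis abs_divide abs_of_pos)
  then show ?thesis by (metis minus_divide_left)
qed

lemma abs_Im_smooth_phase_le:
  assumes "\<bar>Im w\<bar> \<le> \<delta> * Y"
  shows "\<bar>Im (smooth_phase \<delta> \<phi> N w)\<bar> \<le> L * \<delta> * (gauss_step_const * Y * exp (Y^2)) / laplace_gap"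
proof -
  have "Im (smooth_phase \<delta> \<phi> N w) = (\<Sum>n<N. (\<phi> (real (Suc n) * \<delta>) - \<phi> (real n * \<delta>)) *
      Im (smooth_step \<delta> (w - of_real (real n * \<delta>))))"
    by (simp add: smooth_phase_def Im_sum)
  also have "\<bar>\<dots>\<bar> \<le> L * \<delta> * (gauss_step_const * Y * exp (Y^2)) / laplace_gap"
  proof (rule abs_sum_exp_decay_le[OF abs_phase_jump_le])
    fix n
    have "\<bar>Im (smooth_step \<delta> (w - of_real (real n * \<delta>)))\<bar>
        \<le> gauss_step_const * Y * exp (Y^2) * exp (-\<bar>Re w - real n * \<delta>\<bar> / \<delta>)"
      using abs_Im_smooth_step_le[OF \<delta>, of "w - of_real (real n * \<delta>)" Y] assms by simp
    then show "\<bar>Im (smooth_step \<delta> (w - of_real (real n * \<delta>)))\<bar>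
        \<le> gauss_step_const * Y * exp (Y^2) * exp (-\<bar>Re w / \<delta> - real n\<bar>)"
      by (simp only: exp_neg_dist_grid)
  qed
  finally show ?thesis .
qed

lemma Re_smooth_phase_approx:
  assumes s: "0 \<le> s" "s \<le> real N * \<delta>"
  shows "\<bar>Re (smooth_phase \<delta> \<phi> N (of_real s)) - \<phi> s\<bar> \<le> L * \<delta> * (1 + gauss_step_const / laplace_gap)"
proof -
  define D where "D n = \<phi> (real (Suc n) * \<delta>) - \<phi> (real n * \<delta>)" for n
  define H where "H n = (if 0 \<le> s - real n * \<delta> then 1 else 0 :: real)" for n
  define R where "R n = Re (smooth_step \<delta> (of_real (s - real n * \<delta>)))" for n
  obtain m where telescope: "(\<Sum>n<N. D n * H n) = \<phi> (real m * \<delta>) - \<phi> 0"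
    and m_close: "\<bar>real m * \<delta> - s\<bar> \<le> \<delta>"
    using sum_grid_increments_heaviside[OF \<delta> s, of \<phi>] unfolding D_def H_def by blast
  have smoothing: "\<bar>\<Sum>n<N. D n * (R n - H n)\<bar> \<le> L * \<delta> * gauss_step_const / laplace_gap"
  proof (rule abs_sum_exp_decay_le[OF abs_phase_jump_le[unfolded D_def[symmetric]]])
    fix n
    show "\<bar>R n - H n\<bar> \<le> gauss_step_const * exp (-\<bar>s / \<delta> - real n\<bar>)"
      using smooth_step_approx_heaviside[OF \<delta>, of "s - real n * \<delta>"]
      by (simp only: R_def H_def exp_neg_dist_grid)
  qed
  have "Re (smooth_phase \<delta> \<phi> N (of_real s)) = \<phi> 0 + (\<Sum>n<N. D n * R n)"
    unfolding smooth_phase_def R_def D_def by (simp add: Re_sum)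
  then have "Re (smooth_phase \<delta> \<phi> N (of_real s)) - \<phi> s
      = (\<Sum>n<N. D n * (R n - H n)) + (\<phi> (real m * \<delta>) - \<phi> s)"
    using telescope by (simp add: sum_subtractf right_diff_distrib)
  moreover have "\<bar>\<phi> (real m * \<delta>) - \<phi> s\<bar> \<le> L * \<delta>"
  proof -
    have "0 \<le> L" using lipschitz[of 0 1] by simp
    then have "L * \<bar>real m * \<delta> - s\<bar> \<le> L * \<delta>"
      by (rule mult_left_mono[OF m_close])
    then show ?thesis
      using lipschitz[of "real m * \<delta>" s] s(1) \<delta> by simp
  qed
  ultimately have "\<bar>Re (smooth_phase \<delta> \<phi> N (of_real s)) - \<phi> s\<bar>
      \<le> L * \<delta> * gauss_step_const / laplace_gap + L * \<delta>"
    using smoothing abs_triangle_ineq[of "\<Sum>n<N. D n * (R n - H n)" "\<phi> (real m * \<delta>) - \<phi> s"]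
    by linarith
  then show ?thesis by (simp add: algebra_simps)
qed

end

section \<open>The Volterra operator along rays\<close>

lemma volterra_has_field_derivative:
  assumes "f holomorphic_on ball 0 1" "g holomorphic_on ball 0 1" "z \<in> ball 0 1"
  shows "(volterra g f has_field_derivative f z * deriv g z) (at z)"
proof -
  have "(\<lambda>w. f w * deriv g w) holomorphic_on ball 0 1"
    using assms(1,2) by (auto intro!: holomorphic_intros)
  then show ?thesis
    unfolding volterra_def[abs_def]
    by (rule contour_integral_linepath_has_field_derivative) (use assms(3) in auto)
qed

lemma holomorphic_on_volterra:
  assumes "f holomorphic_on ball 0 1" "g holomorphic_on ball 0 1"
  shows "volterra g f holomorphic_on ball 0 1"
  using volterra_has_field_derivative[OF assms]
  by (meson field_differentiable_def field_differentiable_at_within holomorphic_on_def)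

lemma volterra_ray:
  "0 \<le> t \<Longrightarrow> volterra g f (of_real t * \<zeta>)
      = \<zeta> * integral {0..t} (\<lambda>r. f (of_real r * \<zeta>) * deriv g (of_real r * \<zeta>))"
  unfolding volterra_def by (rule contour_integral_linepath_ray)

lemma continuous_on_ray:
  fixes q :: "complex \<Rightarrow> 'b::topological_space"
  assumes "continuous_on (ball 0 1) q" "norm \<zeta> = 1" "t < 1"
  shows "continuous_on {0..t} (\<lambda>r. q (of_real r * \<zeta>))"
proof (rule continuous_on_compose2[OF assms(1)])
  show "(\<lambda>r. of_real r * \<zeta>) ` {0..t} \<subseteq> ball 0 1"
    using assms(2,3) by (auto simp: norm_mult)
qed (intro continuous_intros)

definition radial_integral :: "(complex \<Rightarrow> complex) \<Rightarrow> real \<Rightarrow> complex \<Rightarrow> real \<Rightarrow> real" where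
  "radial_integral g \<alpha> \<zeta> t = integral {0..t} (\<lambda>r. norm (deriv g (of_real r * \<zeta>)) / (1 - r^2) powr \<alpha>)"

lemma continuous_on_radial_integrand:
  assumes "g holomorphic_on ball 0 1" "norm \<zeta> = 1" "t < 1"
  shows "continuous_on {0..t} (\<lambda>r. norm (deriv g (of_real r * \<zeta>)) / (1 - r^2) powr \<alpha>)"
proof -
  have "continuous_on (ball 0 1) (deriv g)"
    by (intro holomorphic_on_imp_continuous_on holomorphic_intros assms(1) open_ball)
  moreover have "0 < 1 - r^2" if "r \<in> {0..t}" for r
    using that assms(3) by (simp add: power_less_one_iff abs_square_less_1)
  ultimately show ?thesis
    by (intro continuous_intros continuous_on_ray assms(2,3)) force+
qed

lemma radial_integral_nonneg:
  "g holomorphic_on ball 0 1 \<Longrightarrow> norm \<zeta> = 1 \<Longrightarrow> t < 1 \<Longrightarrow> 0 \<le> radial_integral g \<alpha> \<zeta> t"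
  unfolding radial_integral_def
  by (rule integral_nonneg[OF integrable_continuous_interval[OF continuous_on_radial_integrand]]) auto

lemma weighted_norm_le_hinf_norm:
  assumes "f \<in> Hinf \<alpha>" "z \<in> ball 0 1"
  shows "(1 - norm z ^ 2) powr \<alpha> * norm (f z) \<le> hinf_norm \<alpha> f"
  using assms unfolding hinf_norm_def Hinf_def
  by (auto intro!: cSUP_upper bounded_imp_bdd_above)

lemma hinf_norm_nonneg: "f \<in> Hinf \<alpha> \<Longrightarrow> 0 \<le> hinf_norm \<alpha> f"
  using weighted_norm_le_hinf_norm[of f \<alpha> 0] by (simp add: order_trans[rotated])

lemma Hinf_and_hinf_norm_le:
  assumes "f holomorphic_on ball 0 1"
    and bound: "\<And>z. z \<in> ball 0 1 \<Longrightarrow> (1 - norm z ^ 2) powr \<alpha> * norm (f z) \<le> M"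
  shows "f \<in> Hinf \<alpha>" "hinf_norm \<alpha> f \<le> M"
proof -
  have "bounded ((\<lambda>z. (1 - norm z ^ 2) powr \<alpha> * norm (f z)) ` ball 0 1)"
    using bound by (auto simp: bounded_iff intro!: exI[of _ M])
  then show "f \<in> Hinf \<alpha>" using assms(1) by (simp add: Hinf_def)
  show "hinf_norm \<alpha> f \<le> M"
    unfolding hinf_norm_def by (rule cSUP_least) (use bound in auto)
qed

lemma norm_volterra_ray_le:
  assumes g: "g holomorphic_on ball 0 1" and f: "f \<in> Hinf \<alpha>"
    and \<zeta>: "norm \<zeta> = 1" and t: "0 \<le> t" "t < 1"
  shows "norm (volterra g f (of_real t * \<zeta>)) \<le> hinf_norm \<alpha> f * radial_integral g \<alpha> \<zeta> t"
proof -
  define k where "k r = norm (deriv g (of_real r * \<zeta>)) / (1 - r^2) powr \<alpha>" for r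
  have "continuous_on (ball 0 1) f" "continuous_on (ball 0 1) (deriv g)"
    using f g by (auto simp: Hinf_def intro!: holomorphic_on_imp_continuous_on holomorphic_intros)
  then have integrable: "(\<lambda>r. f (of_real r * \<zeta>) * deriv g (of_real r * \<zeta>)) integrable_on {0..t}"
    using \<zeta> t by (intro integrable_continuous_interval continuous_intros continuous_on_ray)
  have k_integrable: "(\<lambda>r. hinf_norm \<alpha> f * k r) integrable_on {0..t}"
    unfolding k_def
    by (intro integrable_on_mult_right integrable_continuous_interval continuous_on_radial_integrand g \<zeta> t)
  have bound: "norm (f (of_real r * \<zeta>) * deriv g (of_real r * \<zeta>)) \<le> hinf_norm \<alpha> f * k r"
    if r: "r \<in> {0..t}" for r
  proof -
    have z: "of_real r * \<zeta> \<in> ball 0 1" and "norm (of_real r * \<zeta>) = r" and "0 < 1 - r^2"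
      using r t \<zeta> by (auto simp: norm_mult power_less_one_iff abs_square_less_1)
    then have "norm (f (of_real r * \<zeta>)) \<le> hinf_norm \<alpha> f / (1 - r^2) powr \<alpha>"
      using weighted_norm_le_hinf_norm[OF f z] by (simp add: field_simps)
    then have "norm (f (of_real r * \<zeta>)) * norm (deriv g (of_real r * \<zeta>))
        \<le> hinf_norm \<alpha> f / (1 - r^2) powr \<alpha> * norm (deriv g (of_real r * \<zeta>))"
      by (rule mult_right_mono) simp
    then show ?thesis
      by (simp add: k_def norm_mult)
  qed
  have "norm (volterra g f (of_real t * \<zeta>))
      = norm (integral {0..t} (\<lambda>r. f (of_real r * \<zeta>) * deriv g (of_real r * \<zeta>)))"
    using t \<zeta> by (simp add: volterra_ray norm_mult)
  also have "\<dots> \<le> integral {0..t} (\<lambda>r. hinf_norm \<alpha> f * k r)"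
    by (rule integral_norm_bound_integral[OF integrable k_integrable bound])
  also have "\<dots> = hinf_norm \<alpha> f * radial_integral g \<alpha> \<zeta> t"
    unfolding radial_integral_def k_def by (rule integral_mult_right)
  finally show ?thesis .
qed

lemma polar_cis:
  obtains \<theta> where "\<theta> \<in> {0..<2*pi}" "z = of_real (norm z) * cis \<theta>"
  using Arg2pi[of z] that by (auto simp: is_Arg_def cis_conv_exp)

lemma volterra_bounded_if_radial_bound:
  assumes g: "g holomorphic_on ball 0 1"
    and M: "\<forall>\<theta>\<in>{0..<2*pi}. \<forall>t\<in>{0..<1}. (1 - t^2) powr \<beta> * radial_integral g \<alpha> (cis \<theta>) t \<le> M"
  shows "volterra_bounded g \<alpha> \<beta>"
proof -
  have weighted: "(1 - norm z ^ 2) powr \<beta> * norm (volterra g f z) \<le> M * hinf_norm \<alpha> f"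
    if f: "f \<in> Hinf \<alpha>" and z: "z \<in> ball 0 1" for f z
  proof -
    obtain \<theta> where \<theta>: "\<theta> \<in> {0..<2*pi}" "z = of_real (norm z) * cis \<theta>"
      by (rule polar_cis)
    have "norm (volterra g f z) \<le> hinf_norm \<alpha> f * radial_integral g \<alpha> (cis \<theta>) (norm z)"
      using norm_volterra_ray_le[OF g f, of "cis \<theta>" "norm z"] z \<theta>(2) by simp
    then have "(1 - norm z ^ 2) powr \<beta> * norm (volterra g f z)
        \<le> (1 - norm z ^ 2) powr \<beta> * (hinf_norm \<alpha> f * radial_integral g \<alpha> (cis \<theta>) (norm z))"
      by (rule mult_left_mono) simp
    also have "\<dots> = hinf_norm \<alpha> f * ((1 - norm z ^ 2) powr \<beta> * radial_integral g \<alpha> (cis \<theta>) (norm z))"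
      by (simp add: mult_ac)
    also have "\<dots> \<le> hinf_norm \<alpha> f * M"
      using M \<theta>(1) z hinf_norm_nonneg[OF f] by (intro mult_left_mono) auto
    finally show ?thesis by (simp add: mult.commute)
  qed
  have "volterra g f \<in> Hinf \<beta> \<and> hinf_norm \<beta> (volterra g f) \<le> M * hinf_norm \<alpha> f"
    if f: "f \<in> Hinf \<alpha>" for f
    using Hinf_and_hinf_norm_le[OF holomorphic_on_volterra weighted[OF f]] f g
    by (simp add: Hinf_def)
  then show ?thesis
    unfolding volterra_bounded_def by blast
qed

lemma radial_integral_bounded_near_0:
  assumes g: "g holomorphic_on ball 0 1" and \<alpha>: "0 \<le> \<alpha>" and b: "0 \<le> b" "b < 1"
  obtains C where "\<And>\<zeta> t. norm \<zeta> = 1 \<Longrightarrow> 0 \<le> t \<Longrightarrow> t \<le> b \<Longrightarrow> radial_integral g \<alpha> \<zeta> t \<le> C"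
proof -
  have "continuous_on (ball 0 1) (deriv g)"
    by (intro holomorphic_on_imp_continuous_on holomorphic_intros g open_ball)
  then have "continuous_on (cball 0 b) (deriv g)"
    by (rule continuous_on_subset) (use b in auto)
  then have "bounded (deriv g ` cball 0 b)"
    by (intro compact_imp_bounded compact_continuous_image compact_cball)
  then obtain G where G: "\<And>w. w \<in> cball 0 b \<Longrightarrow> norm (deriv g w) \<le> G"
    unfolding bounded_iff by blast
  have pos: "0 < 1 - b^2"
    using b by (simp add: power_less_one_iff abs_square_less_1)
  define C where "C = G / (1 - b^2) powr \<alpha>"
  have "0 \<le> C"
    using G[of 0] b pos by (simp add: C_def order_trans[OF norm_ge_zero])
  have "radial_integral g \<alpha> \<zeta> t \<le> C" if \<zeta>: "norm \<zeta> = 1" and t: "0 \<le> t" "t \<le> b" for \<zeta> t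
  proof -
    have "radial_integral g \<alpha> \<zeta> t \<le> integral {0..t} (\<lambda>r. C)"
      unfolding radial_integral_def
    proof (rule integral_le)
      show "(\<lambda>r. norm (deriv g (of_real r * \<zeta>)) / (1 - r^2) powr \<alpha>) integrable_on {0..t}"
        using t b by (intro integrable_continuous_interval continuous_on_radial_integrand g \<zeta>) simp
      fix r assume r: "r \<in> {0..t}"
      then have "norm (deriv g (of_real r * \<zeta>)) \<le> G"
        using t \<zeta> by (intro G) (simp add: norm_mult)
      moreover have "(1 - b^2) powr \<alpha> \<le> (1 - r^2) powr \<alpha>"
        using r t pos \<alpha> by (intro powr_mono2) (auto intro!: power_mono)
      ultimately show "norm (deriv g (of_real r * \<zeta>)) / (1 - r^2) powr \<alpha> \<le> C"
        unfolding C_def using pos by (intro frac_le) (auto intro: order_trans[OF norm_ge_zero])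
    qed (rule integrable_const_ivl)
    also have "\<dots> = t * C" using t by simp
    also have "\<dots> \<le> C" using t b \<open>0 \<le> C\<close> by (simp add: mult_left_le_one_le)
    finally show ?thesis .
  qed
  then show ?thesis by (rule that)
qed

lemma radial_bound_if_Limsup_finite:
  assumes g: "g holomorphic_on ball 0 1" and \<alpha>: "0 \<le> \<alpha>" and \<beta>: "0 \<le> \<beta>"
    and Limsup: "Limsup (at_left 1) (\<lambda>t::real. SUP \<theta>\<in>{0..<2*pi}.
                   ereal ((1 - t^2) powr \<beta> * radial_integral g \<alpha> (cis \<theta>) t)) < \<infinity>"
  shows "\<exists>M. \<forall>\<theta>\<in>{0..<2*pi}. \<forall>t\<in>{0..<1}. (1 - t^2) powr \<beta> * radial_integral g \<alpha> (cis \<theta>) t \<le> M"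
proof -
  let ?F = "\<lambda>t::real. SUP \<theta>\<in>{0..<2*pi}. ereal ((1 - t^2) powr \<beta> * radial_integral g \<alpha> (cis \<theta>) t)"
  obtain L :: real where "Limsup (at_left 1) ?F < ereal L"
    using Limsup less_PInf_Ex_of_nat by auto
  then have "eventually (\<lambda>t. ?F t < ereal L) (at_left 1)"
    by (rule Limsup_lessD)
  then obtain b where b: "b < 1" "\<And>t. b < t \<Longrightarrow> t < 1 \<Longrightarrow> ?F t < ereal L"
    by (auto simp: eventually_at_left_field)
  obtain C where C: "\<And>\<zeta> t. norm \<zeta> = 1 \<Longrightarrow> 0 \<le> t \<Longrightarrow> t \<le> max b 0 \<Longrightarrow> radial_integral g \<alpha> \<zeta> t \<le> C"
    using radial_integral_bounded_near_0[OF g \<alpha>, of "max b 0"] b by auto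
  have "(1 - t^2) powr \<beta> * radial_integral g \<alpha> (cis \<theta>) t \<le> max L C"
    if \<theta>: "\<theta> \<in> {0..<2*pi}" and t: "t \<in> {0..<1}" for \<theta> t
  proof (cases "b < t")
    case True
    have "ereal ((1 - t^2) powr \<beta> * radial_integral g \<alpha> (cis \<theta>) t) \<le> ?F t"
      by (rule SUP_upper[OF \<theta>])
    also have "\<dots> < ereal L" using b(2)[OF True] t by simp
    finally show ?thesis by simp
  next
    case False
    have I: "0 \<le> radial_integral g \<alpha> (cis \<theta>) t" "radial_integral g \<alpha> (cis \<theta>) t \<le> C"
      using radial_integral_nonneg[OF g, of "cis \<theta>" t] C[of "cis \<theta>" t] False t by auto
    have "(1 - t^2) powr \<beta> \<le> 1"
      using t \<beta> by (intro powr_le1) (auto simp: power_le_one)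
    then have "(1 - t^2) powr \<beta> * radial_integral g \<alpha> (cis \<theta>) t \<le> radial_integral g \<alpha> (cis \<theta>) t"
      using I(1) by (simp add: mult_left_le_one_le)
    then show ?thesis using I(2) by simp
  qed
  then show ?thesis by blast
qed

lemma Limsup_radial_finite_iff:
  assumes g: "g holomorphic_on ball 0 1" and \<alpha>: "0 \<le> \<alpha>" and \<beta>: "0 \<le> \<beta>"
  shows "Limsup (at_left 1) (\<lambda>t::real. SUP \<theta>\<in>{0..<2*pi}.
             ereal ((1 - t^2) powr \<beta> * radial_integral g \<alpha> (cis \<theta>) t)) < \<infinity>
     \<longleftrightarrow> (\<exists>M. \<forall>\<theta>\<in>{0..<2*pi}. \<forall>t\<in>{0..<1}. (1 - t^2) powr \<beta> * radial_integral g \<alpha> (cis \<theta>) t \<le> M)"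
    (is "Limsup _ ?F < \<infinity> \<longleftrightarrow> ?bounded")
proof
  assume "Limsup (at_left 1) ?F < \<infinity>"
  then show ?bounded
    by (rule radial_bound_if_Limsup_finite[OF g \<alpha> \<beta>])
next
  assume ?bounded
  then obtain M where M: "\<And>\<theta> t. \<theta> \<in> {0..<2*pi} \<Longrightarrow> t \<in> {0..<1} \<Longrightarrow>
      (1 - t^2) powr \<beta> * radial_integral g \<alpha> (cis \<theta>) t \<le> M" by blast
  have "eventually (\<lambda>t. ?F t \<le> ereal M) (at_left 1)"
    unfolding eventually_at_left_field
    by (rule exI[of _ 0]) (auto intro!: SUP_least M)
  then have "Limsup (at_left 1) ?F \<le> ereal M"
    by (rule Limsup_bounded)
  then show "Limsup (at_left 1) ?F < \<infinity>"
    using le_less_trans by fastforce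
qed

section \<open>Test functions from a Bloch logarithm of \<open>g'\<close>\<close>

lemma bloch_radial_lipschitz:
  fixes h :: "complex \<Rightarrow> complex"
  assumes h: "h holomorphic_on ball 0 1"
    and bloch: "\<And>z. z \<in> ball 0 1 \<Longrightarrow> (1 - norm z ^ 2) * norm (deriv h z) \<le> B"
    and \<zeta>: "norm \<zeta> = 1" and a: "0 \<le> a" and b: "0 \<le> b"
  shows "norm (h (of_real (1 - exp (-a)) * \<zeta>) - h (of_real (1 - exp (-b)) * \<zeta>)) \<le> B * \<bar>a - b\<bar>"
proof -
  define \<gamma> where "\<gamma> s = of_real (1 - exp (-s)) * \<zeta>" for s
  define D where "D s = of_real (exp (-s)) * \<zeta> * deriv h (\<gamma> s)" for s
  have norm_\<gamma>: "norm (\<gamma> s) = 1 - exp (-s)" if "0 \<le> s" for s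
    unfolding \<gamma>_def norm_mult norm_of_real \<zeta> using that by simp
  have \<gamma>_in: "\<gamma> s \<in> ball 0 1" if "0 \<le> s" for s
    using norm_\<gamma>[OF that] by simp
  have derivative: "((\<lambda>s. h (\<gamma> s)) has_vector_derivative D s) (at s)" if s: "0 \<le> s" for s
  proof -
    have "(\<gamma> has_vector_derivative of_real (exp (-s)) * \<zeta>) (at s)"
      unfolding \<gamma>_def[abs_def] by (auto intro!: derivative_eq_intros)
    moreover have "(h has_field_derivative deriv h (\<gamma> s)) (at (\<gamma> s))"
      using holomorphic_derivI[OF h open_ball \<gamma>_in[OF s]] by simp
    ultimately have "((h \<circ> \<gamma>) has_vector_derivative of_real (exp (-s)) * \<zeta> * deriv h (\<gamma> s)) (at s)"
      by (rule field_vector_diff_chain_at)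
    then show ?thesis
      by (simp add: D_def o_def)
  qed
  have D_le: "norm (D s) \<le> B" if s: "0 \<le> s" for s
  proof -
    define r where "r = 1 - exp (-s)"
    have r: "0 \<le> r" "r < 1" "norm (\<gamma> s) = r"
      using s norm_\<gamma>[OF s] by (auto simp: r_def)
    have "norm (D s) = (1 - r) * norm (deriv h (\<gamma> s))"
      using \<zeta> by (simp add: D_def r_def norm_mult)
    also have "\<dots> \<le> (1 - r^2) * norm (deriv h (\<gamma> s))"
      using r by (intro mult_right_mono) (auto simp: power2_eq_square mult_left_le)
    also have "\<dots> \<le> B"
      using bloch[OF \<gamma>_in[OF s]] r by simp
    finally show ?thesis .
  qed
  have "norm (h (\<gamma> a) - h (\<gamma> b)) \<le> B * norm (a - b)"
  proof (rule differentiable_bound[of "{0..}" _ "\<lambda>s e. e *\<^sub>R D s"])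
    fix s :: real assume "s \<in> {0..}"
    then show "((\<lambda>s. h (\<gamma> s)) has_derivative (\<lambda>e. e *\<^sub>R D s)) (at s within {0..})"
      using derivative[of s] by (auto simp: has_vector_derivative_def intro: has_derivative_at_withinI)
    show "onorm (\<lambda>e. e *\<^sub>R D s) \<le> B"
      using D_le[of s] \<open>s \<in> {0..}\<close> by (simp add: onorm_scaleR_left[OF bounded_linear_ident] onorm_id)
  qed (use a b in auto)
  then show ?thesis by (simp add: \<gamma>_def)
qed

lemma cos_ge_half:
  fixes x :: real
  assumes "\<bar>x\<bar> \<le> 1"
  shows "1/2 \<le> cos x"
proof -
  have "cos (pi/3) \<le> cos \<bar>x\<bar>"
    using assms pi_gt3 by (intro cos_monotone_0_pi_le) auto
  then show ?thesis by (simp add: cos_60)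
qed

definition step_width :: "real \<Rightarrow> real" where
  "step_width L = 1 / ((L + 1) * (1 + gauss_step_const / laplace_gap))"

text \<open>The bound of \<open>abs_Im_smooth_phase_le\<close> on the strip \<open>|Im w| \<le> \<pi>/2 = \<delta> Y\<close>, where
  \<open>\<delta> = step_width L\<close> and \<open>Y = \<pi> / (2 \<delta>)\<close>.\<close>

definition phase_im_bound :: "real \<Rightarrow> real" where
  "phase_im_bound L = L * step_width L *
     (gauss_step_const * (pi / (2 * step_width L)) * exp ((pi / (2 * step_width L))^2)) / laplace_gap"

lemma gauss_step_const_pos: "0 < gauss_step_const"
  using gauss_limit_pos by (simp add: gauss_step_const_def)

lemma step_width_pos: "0 \<le> L \<Longrightarrow> 0 < step_width L"
  using gauss_step_const_pos laplace_gap_pos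
  by (simp add: step_width_def add_pos_nonneg)

lemma step_width_error_le: "0 \<le> L \<Longrightarrow> L * step_width L * (1 + gauss_step_const / laplace_gap) \<le> 1"
  using gauss_step_const_pos laplace_gap_pos by (simp add: step_width_def)

locale radial_test_function =
  fixes g h :: "complex \<Rightarrow> complex" and \<alpha> B t :: real and \<zeta> :: complex
  assumes g: "g holomorphic_on ball 0 1" and h: "h holomorphic_on ball 0 1"
    and exp_h: "\<And>z. z \<in> ball 0 1 \<Longrightarrow> exp (h z) = deriv g z"
    and bloch: "\<And>z. z \<in> ball 0 1 \<Longrightarrow> (1 - norm z ^ 2) * norm (deriv h z) \<le> B"
    and \<alpha>: "0 \<le> \<alpha>" and \<zeta>: "norm \<zeta> = 1" and t: "0 \<le> t" "t < 1"
begin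

lemma B_nonneg: "0 \<le> B"
  using bloch[of 0] by (simp add: order_trans[OF norm_ge_zero])

definition phase :: "real \<Rightarrow> real" where
  "phase s = - Im (h (of_real (1 - exp (-s)) * \<zeta>))"

lemma phase_lipschitz: "0 \<le> a \<Longrightarrow> 0 \<le> b \<Longrightarrow> \<bar>phase a - phase b\<bar> \<le> B * \<bar>a - b\<bar>"
  using bloch_radial_lipschitz[OF h bloch \<zeta>, of a b]
    abs_Im_le_cmod[of "h (of_real (1 - exp (-a)) * \<zeta>) - h (of_real (1 - exp (-b)) * \<zeta>)"]
  by (simp add: phase_def)

definition num_steps :: nat where
  "num_steps = nat \<lceil>- ln (1 - t) / step_width B\<rceil>"

definition approx_phase :: "complex \<Rightarrow> complex" where
  "approx_phase = smooth_phase (step_width B) phase num_steps"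

lemma abs_Im_approx_phase_le: "\<bar>Im w\<bar> \<le> pi/2 \<Longrightarrow> \<bar>Im (approx_phase w)\<bar> \<le> phase_im_bound B"
  unfolding approx_phase_def phase_im_bound_def
  by (rule abs_Im_smooth_phase_le[OF phase_lipschitz step_width_pos[OF B_nonneg]])
    (use step_width_pos[OF B_nonneg] in simp_all)

lemma Re_approx_phase_close:
  assumes "0 \<le> s" "s \<le> - ln (1 - t)"
  shows "\<bar>Re (approx_phase (of_real s)) - phase s\<bar> \<le> 1"
proof -
  have "- ln (1 - t) / step_width B \<le> real num_steps"
    unfolding num_steps_def by (rule real_nat_ceiling_ge)
  then have "- ln (1 - t) \<le> real num_steps * step_width B"
    by (simp only: pos_divide_le_eq[OF step_width_pos[OF B_nonneg]])
  then have "\<bar>Re (approx_phase (of_real s)) - phase s\<bar>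
      \<le> B * step_width B * (1 + gauss_step_const / laplace_gap)"
    unfolding approx_phase_def using assms
    by (intro Re_smooth_phase_approx[OF phase_lipschitz step_width_pos[OF B_nonneg]]) auto
  also have "\<dots> \<le> 1"
    by (rule step_width_error_le[OF B_nonneg])
  finally show ?thesis .
qed

definition log_kernel :: "complex \<Rightarrow> complex" where
  "log_kernel z = - Ln (1 - cnj \<zeta> * z)"

lemma Re_one_minus_cnj_mult_pos: "z \<in> ball 0 1 \<Longrightarrow> 0 < Re (1 - cnj \<zeta> * z)"
  using complex_Re_le_cmod[of "cnj \<zeta> * z"] \<zeta> by (simp add: norm_mult)

lemma holomorphic_on_log_kernel: "log_kernel holomorphic_on ball 0 1"
  unfolding log_kernel_def[abs_def]
proof (intro holomorphic_intros)
  fix z :: complex assume "z \<in> ball 0 1"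
  then show "1 - cnj \<zeta> * z \<notin> \<real>\<^sub>\<le>\<^sub>0"
    using Re_one_minus_cnj_mult_pos[of z] by (auto simp: complex_nonpos_Reals_iff)
qed

lemma abs_Im_log_kernel_le: "z \<in> ball 0 1 \<Longrightarrow> \<bar>Im (log_kernel z)\<bar> \<le> pi/2"
  using Re_Ln_pos_lt_imp[OF Re_one_minus_cnj_mult_pos] by (simp add: log_kernel_def less_imp_le)

lemma Re_log_kernel: "z \<in> ball 0 1 \<Longrightarrow> Re (log_kernel z) = - ln (norm (1 - cnj \<zeta> * z))"
proof -
  assume "z \<in> ball 0 1"
  then have "1 - cnj \<zeta> * z \<noteq> 0"
    using Re_one_minus_cnj_mult_pos by fastforce
  then show ?thesis by (simp add: log_kernel_def)
qed

lemma log_kernel_ray: "0 \<le> r \<Longrightarrow> r < 1 \<Longrightarrow> log_kernel (of_real r * \<zeta>) = of_real (- ln (1 - r))"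
proof -
  assume r: "0 \<le> r" "r < 1"
  have "cnj \<zeta> * \<zeta> = 1"
    using \<zeta> by (simp add: complex_norm_square[symmetric] mult.commute)
  then have "cnj \<zeta> * (of_real r * \<zeta>) = of_real r"
    by (metis mult.left_commute mult.right_neutral)
  then have eq: "1 - cnj \<zeta> * (of_real r * \<zeta>) = of_real (1 - r)"
    by simp
  show ?thesis
    unfolding log_kernel_def eq using Ln_of_real[of "1 - r"] r by simp
qed

definition test_fun :: "complex \<Rightarrow> complex" where
  "test_fun z = cnj \<zeta> * exp (\<i> * approx_phase (log_kernel z) + of_real \<alpha> * log_kernel z)"

lemma holomorphic_on_test_fun: "test_fun holomorphic_on ball 0 1"
proof -
  have "(\<lambda>z. cnj \<zeta> * exp (\<i> * approx_phase (log_kernel z) + of_real \<alpha> * log_kernel z)) holomorphic_on ball 0 1"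
    unfolding approx_phase_def by (intro holomorphic_intros holomorphic_on_log_kernel)
  then show ?thesis by (simp add: test_fun_def[abs_def])
qed

lemma weighted_norm_test_fun_le:
  assumes z: "z \<in> ball 0 1"
  shows "(1 - norm z ^ 2) powr \<alpha> * norm (test_fun z) \<le> exp (phase_im_bound B) * 2 powr \<alpha>"
proof -
  define u where "u = norm (1 - cnj \<zeta> * z)"
  have u: "1 - norm z \<le> u" "0 < u"
    using norm_triangle_ineq2[of 1 "cnj \<zeta> * z"] z \<zeta> by (auto simp: u_def norm_mult)
  have "norm (test_fun z) = exp (- Im (approx_phase (log_kernel z)) + \<alpha> * Re (log_kernel z))"
    using \<zeta> by (simp add: test_fun_def norm_mult)
  also have "\<dots> \<le> exp (phase_im_bound B + \<alpha> * (- ln u))"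
    using abs_Im_approx_phase_le[OF abs_Im_log_kernel_le[OF z]] Re_log_kernel[OF z] by (simp add: u_def)
  also have "\<dots> = exp (phase_im_bound B) * u powr (- \<alpha>)"
    using u by (simp add: powr_def flip: exp_add)
  finally have "(1 - norm z ^ 2) powr \<alpha> * norm (test_fun z)
      \<le> (1 - norm z ^ 2) powr \<alpha> * (exp (phase_im_bound B) * u powr (- \<alpha>))"
    by (rule mult_left_mono) simp
  also have "\<dots> = exp (phase_im_bound B) * ((1 - norm z ^ 2) / u) powr \<alpha>"
    by (simp add: powr_divide powr_minus_divide)
  also have "\<dots> \<le> exp (phase_im_bound B) * 2 powr \<alpha>"
  proof -
    have "1 - norm z ^ 2 = (1 - norm z) * (1 + norm z)"
      by (simp add: power2_eq_square algebra_simps)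
    also have "\<dots> \<le> u * 2"
      using u z by (intro mult_mono) auto
    finally have "(1 - norm z ^ 2) / u \<le> 2"
      using u by (simp add: divide_le_eq)
    moreover have "0 \<le> 1 - norm z ^ 2"
      using z by (simp add: power_le_one)
    ultimately show ?thesis
      using u \<alpha> by (intro mult_left_mono powr_mono2) auto
  qed
  finally show ?thesis .
qed

lemma test_fun_Hinf:
  "test_fun \<in> Hinf \<alpha>" "hinf_norm \<alpha> test_fun \<le> exp (phase_im_bound B) * 2 powr \<alpha>"
  using Hinf_and_hinf_norm_le[OF holomorphic_on_test_fun weighted_norm_test_fun_le] by auto

lemma Re_test_fun_ray:
  assumes r: "0 \<le> r" "r \<le> t"
  shows "exp (- phase_im_bound B) / 2 * (norm (deriv g (of_real r * \<zeta>)) / (1 - r^2) powr \<alpha>)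
           \<le> Re (\<zeta> * (test_fun (of_real r * \<zeta>) * deriv g (of_real r * \<zeta>)))"
proof -
  define z where "z = of_real r * \<zeta>"
  define s where "s = - ln (1 - r)"
  define X where "X = \<i> * approx_phase (of_real s) + of_real (\<alpha> * s) + h z"
  have r1: "r < 1" using r t by simp
  have z: "z \<in> ball 0 1" using r r1 \<zeta> by (simp add: z_def norm_mult)
  have s: "0 \<le> s" "s \<le> - ln (1 - t)" using r r1 t by (auto simp: s_def)
  have "\<zeta> * cnj \<zeta> = 1"
    using \<zeta> by (simp add: complex_norm_square[symmetric])
  then have product: "\<zeta> * (test_fun z * deriv g z) = exp X"
    using log_kernel_ray[OF r(1) r1] exp_h[OF z]
    by (simp add: test_fun_def X_def z_def s_def exp_add mult.assoc[symmetric])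
  have "phase s = - Im (h z)"
    using r1 by (simp add: phase_def s_def z_def)
  then have "\<bar>Im X\<bar> \<le> 1"
    using Re_approx_phase_close[OF s] by (simp add: X_def)
  then have cos: "1/2 \<le> cos (Im X)"
    by (rule cos_ge_half)
  have "\<bar>Im (approx_phase (of_real s))\<bar> \<le> phase_im_bound B"
    by (rule abs_Im_approx_phase_le) simp
  then have phase_factor: "exp (- phase_im_bound B) \<le> exp (- Im (approx_phase (of_real s)))"
    by simp
  have weight_factor: "1 / (1 - r^2) powr \<alpha> \<le> exp (\<alpha> * s)"
  proof -
    have "(1 - r) powr \<alpha> \<le> (1 - r^2) powr \<alpha>"
      using r r1 \<alpha> by (intro powr_mono2) (auto simp: power2_eq_square mult_left_le)
    moreover have "0 < 1 - r^2"
      using r r1 by (simp add: power_less_one_iff abs_square_less_1)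
    ultimately have "1 / (1 - r^2) powr \<alpha> \<le> 1 / (1 - r) powr \<alpha>"
      using r1 by (intro divide_left_mono mult_pos_pos) auto
    also have "\<dots> = exp (\<alpha> * s)"
      using r1 by (simp add: s_def powr_def exp_minus inverse_eq_divide)
    finally show ?thesis .
  qed
  have "exp (- phase_im_bound B) / 2 * (norm (deriv g z) / (1 - r^2) powr \<alpha>)
      = exp (- phase_im_bound B) * (1 / (1 - r^2) powr \<alpha>) * exp (Re (h z)) * (1/2)"
    using exp_h[OF z] by (simp flip: exp_h[OF z])
  also have "\<dots> \<le> exp (- Im (approx_phase (of_real s))) * exp (\<alpha> * s) * exp (Re (h z)) * cos (Im X)"
    using phase_factor weight_factor cos by (intro mult_mono) auto
  also have "\<dots> = Re (exp X)"
    by (simp add: Re_exp X_def flip: exp_add)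
  finally show ?thesis
    using product by (simp add: z_def)
qed

lemma Re_volterra_test_fun:
  "exp (- phase_im_bound B) / 2 * radial_integral g \<alpha> \<zeta> t \<le> Re (volterra g test_fun (of_real t * \<zeta>))"
proof -
  define F where "F r = \<zeta> * (test_fun (of_real r * \<zeta>) * deriv g (of_real r * \<zeta>))" for r
  define k where "k r = norm (deriv g (of_real r * \<zeta>)) / (1 - r^2) powr \<alpha>" for r
  define c where "c = exp (- phase_im_bound B) / 2"
  have "continuous_on (ball 0 1) test_fun" "continuous_on (ball 0 1) (deriv g)"
    by (intro holomorphic_on_imp_continuous_on holomorphic_intros holomorphic_on_test_fun g open_ball)+
  then have F_int: "F integrable_on {0..t}"
    unfolding F_def using \<zeta> t
    by (intro integrable_continuous_interval continuous_intros continuous_on_ray)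
  have Re_F_int: "((\<lambda>r. Re (F r)) has_integral Re (integral {0..t} F)) {0..t}"
    by (rule has_integral_Re[OF integrable_integral[OF F_int]])
  have "c * radial_integral g \<alpha> \<zeta> t = integral {0..t} (\<lambda>r. c * k r)"
    unfolding radial_integral_def k_def by (rule integral_mult_right[symmetric])
  also have "\<dots> \<le> integral {0..t} (\<lambda>r. Re (F r))"
  proof (rule integral_le)
    show "(\<lambda>r. c * k r) integrable_on {0..t}"
      unfolding k_def using continuous_on_radial_integrand[OF g \<zeta> t(2)]
      by (intro integrable_on_mult_right integrable_continuous_interval)
    show "(\<lambda>r. Re (F r)) integrable_on {0..t}"
      using Re_F_int by blast
    show "c * k r \<le> Re (F r)" if "r \<in> {0..t}" for r
      using Re_test_fun_ray[of r] that by (simp add: c_def k_def F_def)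
  qed
  also have "\<dots> = Re (integral {0..t} F)"
    by (rule integral_unique[OF Re_F_int])
  also have "integral {0..t} F = volterra g test_fun (of_real t * \<zeta>)"
    unfolding F_def volterra_ray[OF t(1)] by (rule integral_mult_right)
  finally show ?thesis by (simp add: c_def)
qed

lemma weighted_radial_integral_le:
  assumes "volterra g test_fun \<in> Hinf \<beta>"
    and "hinf_norm \<beta> (volterra g test_fun) \<le> C * hinf_norm \<alpha> test_fun"
  shows "(1 - t^2) powr \<beta> * radial_integral g \<alpha> \<zeta> t
           \<le> 2 * exp (phase_im_bound B) * (max C 0 * (exp (phase_im_bound B) * 2 powr \<alpha>))"
proof -
  define K where "K = exp (phase_im_bound B)"
  define v where "v = volterra g test_fun (of_real t * \<zeta>)"
  have "(1 - t^2) powr \<beta> * norm v \<le> hinf_norm \<beta> (volterra g test_fun)"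
    using weighted_norm_le_hinf_norm[OF assms(1), of "of_real t * \<zeta>"] t \<zeta>
    by (simp add: v_def norm_mult)
  also have "\<dots> \<le> max C 0 * (K * 2 powr \<alpha>)"
    using assms(2) test_fun_Hinf hinf_norm_nonneg[OF test_fun_Hinf(1)]
      mult_mono[of C "max C 0" "hinf_norm \<alpha> test_fun" "K * 2 powr \<alpha>"]
    by (simp add: K_def)
  finally have v_bound: "(1 - t^2) powr \<beta> * norm v \<le> max C 0 * (K * 2 powr \<alpha>)" .
  have "radial_integral g \<alpha> \<zeta> t \<le> 2 * K * Re v"
    using Re_volterra_test_fun by (simp add: K_def v_def exp_minus field_simps)
  also have "\<dots> \<le> 2 * K * norm v"
    by (simp add: K_def complex_Re_le_cmod)
  finally have "(1 - t^2) powr \<beta> * radial_integral g \<alpha> \<zeta> t \<le> (1 - t^2) powr \<beta> * (2 * K * norm v)"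
    by (rule mult_left_mono) simp
  also have "\<dots> = 2 * K * ((1 - t^2) powr \<beta> * norm v)"
    by (simp add: mult_ac)
  also have "\<dots> \<le> 2 * K * (max C 0 * (K * 2 powr \<alpha>))"
    using v_bound by (simp add: K_def)
  finally show ?thesis by (simp add: K_def)
qed

end

lemma radial_bound_if_volterra_bounded:
  assumes g: "g holomorphic_on ball 0 1" and \<alpha>: "0 \<le> \<alpha>"
    and h: "h holomorphic_on ball 0 1" and exp_h: "\<forall>z\<in>ball 0 1. exp (h z) = deriv g z"
    and h_Bloch: "h \<in> Bloch"
    and bounded: "volterra_bounded g \<alpha> \<beta>"
  shows "\<exists>M. \<forall>\<theta>\<in>{0..<2*pi}. \<forall>t\<in>{0..<1}. (1 - t^2) powr \<beta> * radial_integral g \<alpha> (cis \<theta>) t \<le> M"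
proof -
  obtain B where "\<forall>z\<in>ball 0 1. \<bar>(1 - norm z ^ 2) * norm (deriv h z)\<bar> \<le> B"
    using h_Bloch unfolding Bloch_def bounded_iff by auto
  then have B: "\<And>z. z \<in> ball 0 1 \<Longrightarrow> (1 - norm z ^ 2) * norm (deriv h z) \<le> B"
    using abs_ge_self order_trans by blast
  obtain C where C: "\<And>f. f \<in> Hinf \<alpha> \<Longrightarrow> volterra g f \<in> Hinf \<beta>"
    "\<And>f. f \<in> Hinf \<alpha> \<Longrightarrow> hinf_norm \<beta> (volterra g f) \<le> C * hinf_norm \<alpha> f"
    using bounded unfolding volterra_bounded_def by blast
  have "(1 - t^2) powr \<beta> * radial_integral g \<alpha> (cis \<theta>) t
      \<le> 2 * exp (phase_im_bound B) * (max C 0 * (exp (phase_im_bound B) * 2 powr \<alpha>))"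
    if t: "t \<in> {0..<1}" for \<theta> t
  proof -
    interpret radial_test_function g h \<alpha> B t "cis \<theta>"
      using g h exp_h B \<alpha> t by unfold_locales auto
    show ?thesis
      using C test_fun_Hinf(1) by (intro weighted_radial_integral_le) auto
  qed
  then show ?thesis by blast
qed

theorem theorem1:
  fixes \<alpha> \<beta> :: real and g :: "complex \<Rightarrow> complex"
  assumes "\<alpha> \<ge> 0" and "\<beta> \<ge> 0"
    and "g holomorphic_on ball 0 1"
    and "\<forall>z\<in>ball 0 1. deriv g z \<noteq> 0"
    and "\<exists>h. h holomorphic_on ball 0 1 \<and> (\<forall>z\<in>ball 0 1. exp (h z) = deriv g z) \<and> h \<in> Bloch"
  shows "volterra_bounded g \<alpha> \<beta> \<longleftrightarrow>
    Limsup (at_left 1)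
      (\<lambda>t::real. SUP \<theta>\<in>{0..<2*pi}. ereal ((1 - t^2) powr \<beta> *
          integral {0..t} (\<lambda>r. norm (deriv g (of_real r * cis \<theta>)) / (1 - r^2) powr \<alpha>)))
    < \<infinity>"
proof -
  obtain h where h: "h holomorphic_on ball 0 1" "\<forall>z\<in>ball 0 1. exp (h z) = deriv g z" "h \<in> Bloch"
    using assms(5) by blast
  have "volterra_bounded g \<alpha> \<beta> \<longleftrightarrow>
      (\<exists>M. \<forall>\<theta>\<in>{0..<2*pi}. \<forall>t\<in>{0..<1}. (1 - t^2) powr \<beta> * radial_integral g \<alpha> (cis \<theta>) t \<le> M)"
    using radial_bound_if_volterra_bounded[OF assms(3,1) h] volterra_bounded_if_radial_bound[OF assms(3)]
    by blast
  also have "\<dots> \<longleftrightarrow> Limsup (at_left 1)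
      (\<lambda>t::real. SUP \<theta>\<in>{0..<2*pi}. ereal ((1 - t^2) powr \<beta> * radial_integral g \<alpha> (cis \<theta>) t)) < \<infinity>"
    by (rule Limsup_radial_finite_iff[OF assms(3,1,2), symmetric])
  finally show ?thesis
    by (simp only: radial_integral_def)
qed

end
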